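(* Let $K$ be a Hermitian locally trace-class kernel on $L^2(\Xi,\mu)$ and let $f\in L^2(\mu)$ be such that the kernels $L_0(x,y)=K(x,y)-\frac12 f(x)\overline{f(y)}$ and $L_1(x,y)=K(x,y)+\frac12 f(x)\overline{f(y)}$ define integral operators $\mathcal L_0,\mathcal L_1$ with $0\le\mathcal L_0\le I$ and $0\le\mathcal L_1\le I$. Let $\Pi_0,\Pi_1$ be determinantal point processes with background measure $\mu$ and kernels $L_0,L_1$ respectively, and let $\xi$ be a Bernoulli$(1/2)$ random variable independent of $(\Pi_0,\Pi_1)$. Define $\Pi=\Pi_0$ if $\xi=0$ and $\Pi=\Pi_1$ if $\xi=1$. Then $\Pi$ is a determinantal point process with kernel $K$ and background measure $\mu$.
   Context: A determinantal point process with Hermitian kernel $K$ and background measure $\mu$ is a point process whose $k$-point correlation functions with respect to $\mu^{\otimes k}$ are $\det(K(x_i,x_j))_{i,j\le k}$ for all $k\ge1$. *)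

theory Defs
  imports "HOL-Probability.Probability" "Jordan_Normal_Form.Determinant"
begin

definition L2 :: "'a measure \<Rightarrow> ('a \<Rightarrow> complex) \<Rightarrow> bool" where
  "L2 M g \<longleftrightarrow> g \<in> borel_measurable M \<and> integrable M (\<lambda>x. (cmod (g x))\<^sup>2)"

definition hermitian_kernel :: "'a measure \<Rightarrow> ('a \<Rightarrow> 'a \<Rightarrow> complex) \<Rightarrow> bool" where
  "hermitian_kernel M K \<longleftrightarrow>
     (\<lambda>(x,y). K x y) \<in> borel_measurable (M \<Otimes>\<^sub>M M) \<and> (\<forall>x y. K y x = cnj (K x y))"

text \<open>Locally trace class: for every bounded Borel set B the operator chi_B K chi_B on
  L2(B) is trace class, i.e. a product of two Hilbert-Schmidt operators, i.e. its kernel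
  is (a.e.) a composition of two square-integrable kernels on B x B.\<close>
definition locally_trace_class :: "'a::metric_space measure \<Rightarrow> ('a \<Rightarrow> 'a \<Rightarrow> complex) \<Rightarrow> bool" where
  "locally_trace_class M K \<longleftrightarrow>
     (\<forall>B \<in> sets M. bounded B \<longrightarrow>
        (\<exists>A C :: 'a \<times> 'a \<Rightarrow> complex.
           L2 (restrict_space M B \<Otimes>\<^sub>M restrict_space M B) A \<and>
           L2 (restrict_space M B \<Otimes>\<^sub>M restrict_space M B) C \<and>
           (AE p in restrict_space M B \<Otimes>\<^sub>M restrict_space M B.
              K (fst p) (snd p) = (\<integral>z. A (fst p, z) * C (z, snd p) \<partial>restrict_space M B))))"

definition kernel_op_between_0_I :: "'a measure \<Rightarrow> ('a \<Rightarrow> 'a \<Rightarrow> complex) \<Rightarrow> bool" where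
  "kernel_op_between_0_I M L \<longleftrightarrow>
     (\<forall>g. L2 M g \<longrightarrow>
        (AE x in M. integrable M (\<lambda>y. L x y * g y)) \<and>
        L2 M (\<lambda>x. \<integral>y. L x y * g y \<partial>M) \<and>
        (let q = (\<integral>x. (\<integral>y. L x y * g y \<partial>M) * cnj (g x) \<partial>M)
         in q \<in> \<real> \<and> 0 \<le> Re q \<and> Re q \<le> (\<integral>x. (cmod (g x))\<^sup>2 \<partial>M)))"

definition config_space :: "'a measure \<Rightarrow> 'a set measure" where
  "config_space M = sigma (Pow (space M))
     (\<Union>A \<in> sets M. \<Union>n::nat. {{S. S \<subseteq> space M \<and> finite (S \<inter> A) \<and> card (S \<inter> A) = n}})"

definition point_process :: "'w measure \<Rightarrow> 'a::metric_space measure \<Rightarrow> ('w \<Rightarrow> 'a set) \<Rightarrow> bool" where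
  "point_process P M X \<longleftrightarrow> prob_space P \<and> X \<in> measurable P (config_space M) \<and>
     (\<forall>\<omega> \<in> space P. \<forall>B \<in> sets M. bounded B \<longrightarrow> finite (X \<omega> \<inter> B))"

definition kernel_matrix :: "nat \<Rightarrow> ('a \<Rightarrow> 'a \<Rightarrow> complex) \<Rightarrow> (nat \<Rightarrow> 'a) \<Rightarrow> complex mat" where
  "kernel_matrix k K x = mat k k (\<lambda>(i,j). K (x i) (x j))"

text \<open>Determinantal point process: for every k \<ge> 1 the k-point correlation function w.r.t.
  the product measure M^k (i.e. the density of the k-th factorial moment measure) is
  det(K(x_i,x_j)); in particular this determinant is a.e. real and nonnegative.\<close>
definition dpp :: "'w measure \<Rightarrow> 'a::metric_space measure \<Rightarrow> ('a \<Rightarrow> 'a \<Rightarrow> complex) \<Rightarrow> ('w \<Rightarrow> 'a set) \<Rightarrow> bool" where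
  "dpp P M K X \<longleftrightarrow> point_process P M X \<and>
     (\<forall>k \<ge> 1.
        (AE x in PiM {..<k} (\<lambda>_. M).
           Determinant.det (kernel_matrix k K x) \<in> \<real> \<and> 0 \<le> Re (Determinant.det (kernel_matrix k K x))) \<and>
        (\<forall>\<phi> \<in> borel_measurable (PiM {..<k} (\<lambda>_. M)).
           (\<integral>\<^sup>+\<omega>. (\<integral>\<^sup>+x. \<phi> x \<partial>count_space {x \<in> {..<k} \<rightarrow>\<^sub>E X \<omega>. inj_on x {..<k}}) \<partial>P)
           = (\<integral>\<^sup>+x. \<phi> x * ennreal (Re (Determinant.det (kernel_matrix k K x))) \<partial>PiM {..<k} (\<lambda>_. M))))"

end

theory Submission
  imports Defs
begin

text \<open>Multilinearity of the determinant in the rows shows that \<open>det (G + s a b\<^sup>T)\<close> is affine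
  in \<open>s\<close>, so the \<open>k\<close>-point correlation function \<open>det (K(x\<^sub>i,x\<^sub>j))\<close> is the average of those of
  \<open>L\<^sub>0\<close> and \<open>L\<^sub>1\<close>. Since the fair coin \<open>\<xi>\<close> is independent of \<open>(\<Pi>\<^sub>0, \<Pi>\<^sub>1)\<close>, the \<open>k\<close>-th factorial
  moment measure of \<open>\<Pi>\<close> is the average of those of \<open>\<Pi>\<^sub>0\<close> and \<open>\<Pi>\<^sub>1\<close>, hence has the density
  \<open>det (K(x\<^sub>i,x\<^sub>j))\<close>. The technical point is that \<open>S \<mapsto> \<Sum> \<phi>(x)\<close> over injective \<open>k\<close>-tuples of
  points of \<open>S\<close> is a measurable function of the locally finite configuration \<open>S\<close>; this
  follows by a monotone class argument from the measurability of the counts \<open>#(S \<inter> A)\<close>.\<close>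

lemma det_add_rank_one_expand:
  fixes g :: "nat \<Rightarrow> nat \<Rightarrow> complex"
  shows "Determinant.det (mat n n (\<lambda>(i,j). g i j + s * a i * b j)) =
    (\<Sum>f\<in>{f. (\<forall>i\<in>{0..<n}. f i \<in> {0,1}) \<and> (\<forall>i. i \<notin> {0..<n} \<longrightarrow> f i = i)}.
       s ^ card {i\<in>{0..<n}. f i = 1} * ((\<Prod>i\<in>{i\<in>{0..<n}. f i = 1}. a i) *
        Determinant.det (mat\<^sub>r n n (\<lambda>i. if f i = 1 then vec n b else vec n (g i)))))"
proof -
  let ?r = "\<lambda>i k. if k = (1::nat) then vec n (\<lambda>j. s * a i * b j) else vec n (g i)"
  have row_sum: "mat n n (\<lambda>(i,j). g i j + s * a i * b j)
      = mat\<^sub>r n n (\<lambda>i. finsum_vec TYPE(complex) n (?r i) {0,1})"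
  proof (rule eq_matI)
    fix i j assume "i < dim_row (mat\<^sub>r n n (\<lambda>i. finsum_vec TYPE(complex) n (?r i) {0,1}))"
      "j < dim_col (mat\<^sub>r n n (\<lambda>i. finsum_vec TYPE(complex) n (?r i) {0,1}))"
    then have ij: "i < n" "j < n" by simp_all
    have "finsum_vec TYPE(complex) n (?r i) {0,1} $ j = (\<Sum>k\<in>{0,1}. ?r i k $ j)"
      by (rule index_finsum_vec) (use ij in auto)
    moreover have "finsum_vec TYPE(complex) n (?r i) {0,1} \<in> carrier_vec n"
      by (rule finsum_vec_closed) auto
    ultimately show "mat n n (\<lambda>(i,j). g i j + s * a i * b j) $$ (i, j)
        = mat\<^sub>r n n (\<lambda>i. finsum_vec TYPE(complex) n (?r i) {0,1}) $$ (i, j)"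
      using ij by simp
  qed auto
  have "Determinant.det (mat\<^sub>r n n (\<lambda>i. finsum_vec TYPE(complex) n (?r i) {0,1})) =
     (\<Sum>f\<in>{f. (\<forall>i\<in>{0..<n}. f i \<in> {0,1}) \<and> (\<forall>i. i \<notin> {0..<n} \<longrightarrow> f i = i)}.
        Determinant.det (mat\<^sub>r n n (\<lambda>i. ?r i (f i))))"
    by (rule det_linear_rows_sum) auto
  also have "\<dots> = (\<Sum>f\<in>{f. (\<forall>i\<in>{0..<n}. f i \<in> {0,1}) \<and> (\<forall>i. i \<notin> {0..<n} \<longrightarrow> f i = i)}.
       s ^ card {i\<in>{0..<n}. f i = 1} * ((\<Prod>i\<in>{i\<in>{0..<n}. f i = 1}. a i) *
        Determinant.det (mat\<^sub>r n n (\<lambda>i. if f i = 1 then vec n b else vec n (g i)))))"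
  proof (rule sum.cong[OF refl])
    fix f :: "nat \<Rightarrow> nat"
    let ?c = "\<lambda>i. if f i = 1 then s * a i else 1"
    let ?v = "\<lambda>i. if f i = 1 then vec n b else vec n (g i)"
    have "mat\<^sub>r n n (\<lambda>i. ?r i (f i)) = mat\<^sub>r n n (\<lambda>i. ?c i \<cdot>\<^sub>v ?v i)"
      by (rule eq_matI) auto
    then have "Determinant.det (mat\<^sub>r n n (\<lambda>i. ?r i (f i))) = prod ?c {0..<n} * Determinant.det (mat\<^sub>r n n ?v)"
      by (simp add: det_rows_mul)
    also have "prod ?c {0..<n} = (\<Prod>i\<in>{i\<in>{0..<n}. f i = 1}. s * a i)"
      using prod.inter_filter[of "{0..<n}" "\<lambda>i. s * a i" "\<lambda>i. f i = 1"] by simp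
    also have "\<dots> = s ^ card {i\<in>{0..<n}. f i = 1} * (\<Prod>i\<in>{i\<in>{0..<n}. f i = 1}. a i)"
      by (simp add: prod.distrib)
    finally show "Determinant.det (mat\<^sub>r n n (\<lambda>i. ?r i (f i))) = s ^ card {i\<in>{0..<n}. f i = 1} *
        ((\<Prod>i\<in>{i\<in>{0..<n}. f i = 1}. a i) * Determinant.det (mat\<^sub>r n n ?v))" by simp
  qed
  finally show ?thesis by (simp only: row_sum)
qed

text \<open>A term of the expansion with two or more rows replaced by \<open>b\<close> vanishes, so
  \<open>det (G + s a b\<^sup>T)\<close> is affine in \<open>s\<close>.\<close>
lemma det_add_rank_one_plus_minus:
  fixes g :: "nat \<Rightarrow> nat \<Rightarrow> complex"
  shows "Determinant.det (mat n n (\<lambda>(i,j). g i j + t * a i * b j)) +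
         Determinant.det (mat n n (\<lambda>(i,j). g i j + (-t) * a i * b j)) =
         2 * Determinant.det (mat n n (\<lambda>(i,j). g i j))"
proof -
  have zero: "mat n n (\<lambda>(i,j). g i j) = mat n n (\<lambda>(i,j). g i j + 0 * a i * b j)" by simp
  show ?thesis
    unfolding zero det_add_rank_one_expand sum.distrib[symmetric] sum_distrib_left
  proof (rule sum.cong[OF refl])
    fix f :: "nat \<Rightarrow> nat"
    define R where "R = {i\<in>{0..<n}. f i = 1}"
    define X where "X = (\<Prod>i\<in>R. a i) *
        Determinant.det (mat\<^sub>r n n (\<lambda>i. if f i = 1 then vec n b else vec n (g i)))"
    have "X = 0 \<or> card R \<le> 1"
    proof (rule disjCI)
      assume "\<not> card R \<le> 1"
      then obtain i j where ij: "i \<in> R" "j \<in> R" "i \<noteq> j"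
        using card_le_Suc0_iff_eq[of R] by (auto simp: R_def)
      have "Determinant.det (mat\<^sub>r n n (\<lambda>i. if f i = 1 then vec n b else vec n (g i))) = 0"
        by (rule det_identical_rows[of _ n i j]) (use ij in \<open>auto simp: R_def\<close>)
      then show "X = 0" by (simp add: X_def)
    qed
    then have "t ^ card R * X + (- t) ^ card R * X = 2 * (0 ^ card R * X)"
      by (auto simp: le_Suc_eq)
    then show "t ^ card {i\<in>{0..<n}. f i = 1} * ((\<Prod>i\<in>{i\<in>{0..<n}. f i = 1}. a i) *
        Determinant.det (mat\<^sub>r n n (\<lambda>i. if f i = 1 then vec n b else vec n (g i)))) +
      (- t) ^ card {i\<in>{0..<n}. f i = 1} * ((\<Prod>i\<in>{i\<in>{0..<n}. f i = 1}. a i) *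
        Determinant.det (mat\<^sub>r n n (\<lambda>i. if f i = 1 then vec n b else vec n (g i)))) =
      2 * (0 ^ card {i\<in>{0..<n}. f i = 1} * ((\<Prod>i\<in>{i\<in>{0..<n}. f i = 1}. a i) *
        Determinant.det (mat\<^sub>r n n (\<lambda>i. if f i = 1 then vec n b else vec n (g i)))))"
      by (simp add: R_def X_def)
  qed
qed

lemma det_kernel_matrix_rank_one_plus_minus:
  "Determinant.det (kernel_matrix k (\<lambda>x y. K x y - c * g x * h y) x)
   + Determinant.det (kernel_matrix k (\<lambda>x y. K x y + c * g x * h y) x)
   = 2 * Determinant.det (kernel_matrix k K x)"
  using det_add_rank_one_plus_minus[of k "\<lambda>i j. K (x i) (x j)" c "\<lambda>i. g (x i)" "\<lambda>j. h (x j)"]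
  by (simp add: kernel_matrix_def add.commute)

lemma det_kernel_matrix_measurable:
  assumes L: "(\<lambda>p. L (fst p) (snd p)) \<in> borel_measurable (M \<Otimes>\<^sub>M M)"
  shows "(\<lambda>x. Determinant.det (kernel_matrix k L x)) \<in> borel_measurable (PiM {..<k} (\<lambda>_. M))"
proof -
  have entry: "(\<lambda>x. L (x i) (x j)) \<in> borel_measurable (PiM {..<k} (\<lambda>_. M))" if "i < k" "j < k" for i j
  proof -
    have "(\<lambda>x. (x i, x j)) \<in> measurable (PiM {..<k} (\<lambda>_. M)) (M \<Otimes>\<^sub>M M)"
      using that by (intro measurable_Pair measurable_component_singleton) auto
    from measurable_comp[OF this L] show ?thesis by (simp add: comp_def)
  qed
  have perm_image: "p i < k" if "p permutes {0..<k}" "i < k" for p i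
    using that permutes_in_image[of p "{0..<k}" i] by auto
  have "Determinant.det (kernel_matrix k L x) =
     (\<Sum>p\<in>{p. p permutes {0..<k}}. signof p * (\<Prod>i=0..<k. L (x i) (x (p i))))" for x
    by (subst det_def') (auto simp: kernel_matrix_def perm_image intro!: sum.cong prod.cong)
  moreover have "(\<lambda>x. \<Sum>p\<in>{p. p permutes {0..<k}}. signof p * (\<Prod>i=0..<k. L (x i) (x (p i))))
      \<in> borel_measurable (PiM {..<k} (\<lambda>_. M))"
    by (intro borel_measurable_sum borel_measurable_times borel_measurable_const
        borel_measurable_prod) (auto intro: entry perm_image)
  ultimately show ?thesis by simp
qed

definition count_in :: "'a set \<Rightarrow> 'a set \<Rightarrow> ennreal" where
  "count_in A S = (if finite (S \<inter> A) then of_nat (card (S \<inter> A)) else \<infinity>)"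

lemma space_config_space: "space (config_space M) = Pow (space M)"
  unfolding config_space_def by (simp add: space_measure_of_conv)

lemma count_in_measurable:
  assumes A: "A \<in> sets M"
  shows "count_in A \<in> borel_measurable (config_space M)"
proof -
  have count_eq: "{S. S \<subseteq> space M \<and> finite (S \<inter> A) \<and> card (S \<inter> A) = n} \<in> sets (config_space M)" for n
    unfolding config_space_def using A by (intro in_measure_of) auto
  define h where "h S = (if finite (S \<inter> A) then Some (card (S \<inter> A)) else None)" for S
  have countable: "countable (UNIV :: nat option set)" by simp
  have "h \<in> measurable (config_space M) (count_space UNIV)"
    unfolding measurable_count_space_eq_countable[OF countable]
  proof (intro conjI ballI)
    fix a :: "nat option"
    show "h -` {a} \<inter> space (config_space M) \<in> sets (config_space M)"
    proof (cases a)
      case (Some n)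
      then have "h -` {a} \<inter> space (config_space M) = {S. S \<subseteq> space M \<and> finite (S \<inter> A) \<and> card (S \<inter> A) = n}"
        by (auto simp: h_def space_config_space split: if_splits)
      then show ?thesis using count_eq by simp
    next
      case None
      then have "h -` {a} \<inter> space (config_space M)
          = space (config_space M) - (\<Union>n. {S. S \<subseteq> space M \<and> finite (S \<inter> A) \<and> card (S \<inter> A) = n})"
        by (auto simp: h_def space_config_space split: if_splits)
      then show ?thesis using count_eq by auto
    qed
  qed simp
  moreover have "count_in A = case_option \<infinity> of_nat \<circ> h"
    by (auto simp: count_in_def h_def fun_eq_iff)
  ultimately show ?thesis by simp
qed

definition locally_finite_config :: "'a::metric_space set \<Rightarrow> bool" where
  "locally_finite_config S \<longleftrightarrow> (\<forall>B. bounded B \<longrightarrow> finite (S \<inter> B))"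

lemma locally_finite_config_iff_balls:
  "locally_finite_config S \<longleftrightarrow> (\<forall>n::nat. finite (S \<inter> ball c (real n)))"
  unfolding locally_finite_config_def
proof safe
  fix B :: "'a set" assume balls: "\<forall>n::nat. finite (S \<inter> ball c (real n))" and "bounded B"
  then obtain r where "B \<subseteq> ball c r" using bounded_subset_ballD by blast
  moreover obtain n :: nat where "r \<le> real n" using real_arch_simple by blast
  ultimately have "S \<inter> B \<subseteq> S \<inter> ball c (real n)" by auto
  then show "finite (S \<inter> B)" using balls finite_subset by blast
qed simp

lemma locally_finite_configs_sets:
  fixes \<mu> :: "'a::metric_space measure"
  assumes "sets \<mu> = sets borel"
  shows "Collect locally_finite_config \<in> sets (config_space \<mu>)"
proof -
  have space: "space \<mu> = UNIV" using assms sets_eq_imp_space_eq by fastforce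
  have "Collect locally_finite_config
      = (\<Inter>n::nat. count_in (ball undefined (real n)) -` {..<\<infinity>} \<inter> space (config_space \<mu>))"
    by (auto simp: locally_finite_config_iff_balls[of _ undefined] count_in_def
        space_config_space space of_nat_less_top split: if_splits)
  also have "\<dots> \<in> sets (config_space \<mu>)"
    using measurable_sets[OF count_in_measurable, of "ball undefined (real _)" \<mu> "{..<\<infinity>}"] assms
    by (intro sets.countable_INT'[of UNIV]) auto
  finally show ?thesis .
qed

lemma point_process_locally_finite:
  assumes "point_process P \<mu> X" "sets \<mu> = sets borel" "\<omega> \<in> space P"
  shows "locally_finite_config (X \<omega>)"
proof -
  have "ball undefined (real n) \<in> sets \<mu>" for n using assms(2) by simp
  then show ?thesis
    using assms(1,3) unfolding point_process_def locally_finite_config_iff_balls[of _ undefined] by blast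
qed

lemma point_process_if:
  assumes "point_process P \<mu> X" "point_process P \<mu> Y" "{\<omega> \<in> space P. b \<omega>} \<in> sets P"
  shows "point_process P \<mu> (\<lambda>\<omega>. if b \<omega> then X \<omega> else Y \<omega>)"
  using assms unfolding point_process_def by (auto intro: measurable_If)

definition tuples_in_ball :: "nat \<Rightarrow> 'a::metric_space \<Rightarrow> nat \<Rightarrow> (nat \<Rightarrow> 'a) set" where
  "tuples_in_ball k c n = {x. \<forall>i<k. x i \<in> ball c (real n)}"

lemma tuples_in_ball_mono: "m \<le> n \<Longrightarrow> tuples_in_ball k c m \<subseteq> tuples_in_ball k c n"
  unfolding tuples_in_ball_def by (auto intro: less_le_trans)

lemma ex_tuples_in_ball: "\<exists>n. x \<in> tuples_in_ball k c n"
proof -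
  obtain n :: nat where n: "(\<Sum>i<k. dist c (x i)) < real n"
    using reals_Archimedean2 by blast
  have "dist c (x i) < real n" if "i < k" for i
    using member_le_sum[of i "{..<k}" "\<lambda>i. dist c (x i)"] that n by auto
  then show ?thesis unfolding tuples_in_ball_def by auto
qed

lemma nn_integral_count_space_PiE_indicator:
  fixes k :: nat
  assumes "\<And>i. i < k \<Longrightarrow> finite (S \<inter> Y i)"
  shows "(\<integral>\<^sup>+x. indicator (Pi\<^sub>E {..<k} Y) x \<partial>count_space (Pi\<^sub>E {..<k} (\<lambda>_. S))) = (\<Prod>i<k. count_in (Y i) S)"
proof -
  have "(\<integral>\<^sup>+x. indicator (Pi\<^sub>E {..<k} Y) x \<partial>count_space (Pi\<^sub>E {..<k} (\<lambda>_. S)))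
      = (\<integral>\<^sup>+x. indicator (Pi\<^sub>E {..<k} (\<lambda>i. S \<inter> Y i)) x \<partial>count_space (Pi\<^sub>E {..<k} (\<lambda>_. S)))"
    by (rule nn_integral_cong) (auto simp: indicator_def PiE_def Pi_def)
  also have "\<dots> = emeasure (count_space (Pi\<^sub>E {..<k} (\<lambda>_. S))) (Pi\<^sub>E {..<k} (\<lambda>i. S \<inter> Y i))"
    by (rule nn_integral_indicator) (auto simp: PiE_def Pi_def)
  also have "\<dots> = of_nat (card (Pi\<^sub>E {..<k} (\<lambda>i. S \<inter> Y i)))"
    using assms by (intro emeasure_count_space_finite finite_PiE) (auto simp: PiE_def Pi_def)
  also have "\<dots> = (\<Prod>i<k. count_in (Y i) S)"
    by (simp add: card_PiE count_in_def assms of_nat_prod)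
  finally show ?thesis .
qed

lemma nn_integral_count_space_PiE_tuples_in_ball:
  fixes k :: nat
  assumes "locally_finite_config S"
  shows "(\<integral>\<^sup>+x. indicator (Pi\<^sub>E {..<k} X \<inter> tuples_in_ball k c n) x \<partial>count_space (Pi\<^sub>E {..<k} (\<lambda>_. S)))
       = (\<Prod>i<k. count_in (X i \<inter> ball c (real n)) S)"
proof -
  have "(\<integral>\<^sup>+x. indicator (Pi\<^sub>E {..<k} X \<inter> tuples_in_ball k c n) x \<partial>count_space (Pi\<^sub>E {..<k} (\<lambda>_. S)))
     = (\<integral>\<^sup>+x. indicator (Pi\<^sub>E {..<k} (\<lambda>i. X i \<inter> ball c (real n))) x \<partial>count_space (Pi\<^sub>E {..<k} (\<lambda>_. S)))"
    by (rule nn_integral_cong) (auto simp: indicator_def tuples_in_ball_def PiE_def Pi_def)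
  also have "\<dots> = (\<Prod>i<k. count_in (X i \<inter> ball c (real n)) S)"
    using assms unfolding locally_finite_config_iff_balls[of _ c]
    by (intro nn_integral_count_space_PiE_indicator) (auto intro: finite_subset)
  finally show ?thesis .
qed

lemma nn_integral_count_space_indicator_Diff:
  assumes "Q \<subseteq> \<Omega>" and "(\<integral>\<^sup>+x. indicator (\<Omega> \<inter> B) x \<partial>count_space Q) \<noteq> \<infinity>"
  shows "(\<integral>\<^sup>+x. indicator ((\<Omega> - A) \<inter> B) x \<partial>count_space Q)
    = (\<integral>\<^sup>+x. indicator (\<Omega> \<inter> B) x \<partial>count_space Q) - (\<integral>\<^sup>+x. indicator (A \<inter> B) x \<partial>count_space Q)"
proof -
  have "(\<integral>\<^sup>+x. indicator ((\<Omega> - A) \<inter> B) x \<partial>count_space Q)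
      = (\<integral>\<^sup>+x. indicator (\<Omega> \<inter> B) x - indicator (A \<inter> B) x \<partial>count_space Q)"
    using assms(1) by (intro nn_integral_cong) (auto simp: indicator_def)
  also have "\<dots> = (\<integral>\<^sup>+x. indicator (\<Omega> \<inter> B) x \<partial>count_space Q) - (\<integral>\<^sup>+x. indicator (A \<inter> B) x \<partial>count_space Q)"
  proof (rule nn_integral_diff)
    have "(\<integral>\<^sup>+x. indicator (A \<inter> B) x \<partial>count_space Q) \<le> (\<integral>\<^sup>+x. indicator (\<Omega> \<inter> B) x \<partial>count_space Q)"
      using assms(1) by (intro nn_integral_mono) (auto simp: indicator_def)
    then show "(\<integral>\<^sup>+x. indicator (A \<inter> B) x \<partial>count_space Q) \<noteq> \<infinity>"
      using assms(2) by (auto simp: top_unique)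
  qed (use assms(1) in \<open>auto intro!: AE_I2 simp: indicator_def\<close>)
  finally show ?thesis .
qed

text \<open>Dynkin argument; restricting to tuples in a ball keeps all counts finite, which
  the complement step needs.\<close>
lemma measurable_count_tuples_in_ball:
  fixes \<mu> :: "'a::metric_space measure" and k :: nat
  assumes \<mu>: "sets \<mu> = sets borel" and A: "A \<in> sets (PiM {..<k} (\<lambda>_. \<mu>))"
  shows "(\<lambda>S. \<integral>\<^sup>+x. indicator (A \<inter> tuples_in_ball k c n) x \<partial>count_space (Pi\<^sub>E {..<k} (\<lambda>_. S)))
     \<in> borel_measurable (restrict_space (config_space \<mu>) (Collect locally_finite_config))"
proof -
  let ?R = "restrict_space (config_space \<mu>) (Collect locally_finite_config)"
  let ?B = "tuples_in_ball k c n"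
  let ?Q = "\<lambda>S. Pi\<^sub>E {..<k} (\<lambda>_::nat. S)"
  let ?\<Omega> = "Pi\<^sub>E {..<k} (\<lambda>_::nat. space \<mu>)"
  let ?N = "\<lambda>A S. \<integral>\<^sup>+x. indicator (A \<inter> ?B) x \<partial>count_space (?Q S)"
  have space: "space \<mu> = UNIV" using \<mu> sets_eq_imp_space_eq by fastforce
  have space_R: "space ?R = Collect locally_finite_config"
    by (simp add: space_restrict_space space_config_space space)
  have rectangle: "(\<lambda>S. ?N (Pi\<^sub>E {..<k} X) S) \<in> borel_measurable ?R" if "X \<in> {..<k} \<rightarrow> sets \<mu>" for X
  proof -
    have "(\<lambda>S. \<Prod>i<k. count_in (X i \<inter> ball c (real n)) S) \<in> borel_measurable (config_space \<mu>)"
      using that \<mu> by (intro borel_measurable_prod_ennreal count_in_measurable) auto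
    then have "(\<lambda>S. \<Prod>i<k. count_in (X i \<inter> ball c (real n)) S) \<in> borel_measurable ?R"
      by (rule measurable_restrict_space1)
    then show ?thesis
      by (rule measurable_cong[THEN iffD1, rotated])
         (simp add: space_R nn_integral_count_space_PiE_tuples_in_ball)
  qed
  have finite: "?N ?\<Omega> S \<noteq> \<infinity>" if "locally_finite_config S" for S
    using that by (simp add: nn_integral_count_space_PiE_tuples_in_ball count_in_def
        locally_finite_config_iff_balls[of _ c] space flip: of_nat_power)
  from A have "A \<in> sigma_sets ?\<Omega> (prod_algebra {..<k} (\<lambda>_. \<mu>))" by (simp add: sets_PiM)
  then show ?thesis
  proof (induction rule: sigma_sets_induct_disjoint[OF Int_stable_prod_algebra prod_algebra_sets_into_space,
        consumes 1, case_names basic empty compl union])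
    case (basic A)
    then obtain X where "A = Pi\<^sub>E {..<k} X" "X \<in> {..<k} \<rightarrow> sets \<mu>"
      by (auto elim: prod_algebraE_all)
    then show ?case using rectangle by simp
  next
    case empty show ?case by simp
  next
    case (compl A)
    have complement: "?N (?\<Omega> - A) S = ?N ?\<Omega> S - ?N A S" if "locally_finite_config S" for S
      using finite[OF that] by (intro nn_integral_count_space_indicator_Diff) (auto simp: space)
    have "(\<lambda>S. ?N ?\<Omega> S - ?N A S) \<in> borel_measurable ?R"
      using rectangle[of "\<lambda>_. space \<mu>"] compl.IH by (intro borel_measurable_minus_ennreal) auto
    then show ?case
      by (rule measurable_cong[THEN iffD1, rotated]) (simp add: space_R complement)
  next
    case (union A)
    have "disjoint_family (\<lambda>i. A i \<inter> ?B)"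
      using union.hyps(1) by (auto simp: disjoint_family_on_def)
    then have "indicator ((\<Union>i. A i) \<inter> ?B) x = (\<Sum>i. indicator (A i \<inter> ?B) x :: ennreal)" for x
      by (subst suminf_indicator) auto
    then have "?N (\<Union>i. A i) S = (\<Sum>i. ?N (A i) S)" for S
      by (simp add: nn_integral_suminf)
    then show ?case using union.IH by (simp add: borel_measurable_suminf_order)
  qed
qed

lemma measurable_count_tuples_indicator:
  fixes \<mu> :: "'a::metric_space measure" and k :: nat
  assumes \<mu>: "sets \<mu> = sets borel" and A: "A \<in> sets (PiM {..<k} (\<lambda>_. \<mu>))"
  shows "(\<lambda>S. \<integral>\<^sup>+x. indicator A x \<partial>count_space (Pi\<^sub>E {..<k} (\<lambda>_. S)))
     \<in> borel_measurable (restrict_space (config_space \<mu>) (Collect locally_finite_config))"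
proof -
  let ?B = "tuples_in_ball k (undefined :: 'a)"
  have incseq: "incseq (\<lambda>n x. indicator (A \<inter> ?B n) x :: ennreal)"
  proof (rule incseq_SucI)
    fix n
    show "(\<lambda>x. indicator (A \<inter> ?B n) x :: ennreal) \<le> (\<lambda>x. indicator (A \<inter> ?B (Suc n)) x)"
      using tuples_in_ball_mono[of n "Suc n"] unfolding le_fun_def by (auto split: split_indicator)
  qed
  have SUP: "indicator A x = (SUP n. indicator (A \<inter> ?B n) x :: ennreal)" for x
  proof (rule antisym)
    obtain n where "x \<in> ?B n" using ex_tuples_in_ball by blast
    then show "indicator A x \<le> (SUP n. indicator (A \<inter> ?B n) x :: ennreal)"
      by (intro SUP_upper2[of n]) (auto simp: indicator_def)
  qed (rule SUP_least, simp add: indicator_def)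
  have "(\<integral>\<^sup>+x. indicator A x \<partial>count_space (Pi\<^sub>E {..<k} (\<lambda>_. S)))
     = (SUP n. \<integral>\<^sup>+x. indicator (A \<inter> ?B n) x \<partial>count_space (Pi\<^sub>E {..<k} (\<lambda>_. S)))" for S
    unfolding SUP by (rule nn_integral_monotone_convergence_SUP[OF incseq]) simp
  then show ?thesis
    using measurable_count_tuples_in_ball[OF \<mu> A] by (simp add: borel_measurable_SUP)
qed

lemma measurable_count_tuples:
  fixes \<mu> :: "'a::metric_space measure" and k :: nat
  assumes \<mu>: "sets \<mu> = sets borel" and \<psi>: "\<psi> \<in> borel_measurable (PiM {..<k} (\<lambda>_. \<mu>))"
  shows "(\<lambda>S. \<integral>\<^sup>+x. \<psi> x \<partial>count_space (Pi\<^sub>E {..<k} (\<lambda>_. S)))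
     \<in> borel_measurable (restrict_space (config_space \<mu>) (Collect locally_finite_config))"
  using \<psi>
proof (induction rule: borel_measurable_induct)
  case (cong f g)
  have "space \<mu> = UNIV" using \<mu> sets_eq_imp_space_eq by fastforce
  then have "(\<integral>\<^sup>+x. f x \<partial>count_space (Pi\<^sub>E {..<k} (\<lambda>_. S))) = (\<integral>\<^sup>+x. g x \<partial>count_space (Pi\<^sub>E {..<k} (\<lambda>_. S)))" for S
    using cong by (intro nn_integral_cong) (auto simp: space_PiM)
  then show ?case using cong by simp
next
  case (set A) then show ?case by (rule measurable_count_tuples_indicator[OF \<mu>])
next
  case (mult u c) then show ?case by (simp add: nn_integral_cmult borel_measurable_times_ennreal)
next
  case (add u v) then show ?case by (simp add: nn_integral_add borel_measurable_add)
next
  case (seq U)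
  have "(\<integral>\<^sup>+x. (SUP i. U i) x \<partial>count_space (Pi\<^sub>E {..<k} (\<lambda>_. S)))
      = (SUP i. \<integral>\<^sup>+x. U i x \<partial>count_space (Pi\<^sub>E {..<k} (\<lambda>_. S)))" for S
    unfolding SUP_apply by (rule nn_integral_monotone_convergence_SUP) (use seq in auto)
  then show ?case using seq by (simp add: borel_measurable_SUP)
qed

lemma sets_PiM_inj_on:
  fixes \<mu> :: "'a::{second_countable_topology, metric_space} measure" and k :: nat
  assumes \<mu>: "sets \<mu> = sets borel"
  shows "{x \<in> space (PiM {..<k} (\<lambda>_. \<mu>)). inj_on x {..<k}} \<in> sets (PiM {..<k} (\<lambda>_. \<mu>))"
proof -
  let ?P = "PiM {..<k} (\<lambda>_. \<mu>)"
  have coordinate: "(\<lambda>x. x i) \<in> borel_measurable ?P" if "i < k" for i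
    using measurable_component_singleton[of i "{..<k}" "\<lambda>_. \<mu>"] that
      measurable_cong_sets[OF refl \<mu>, of ?P] by simp
  have diagonal: "(\<lambda>x. dist (x i) (x j)) -` {0} \<inter> space ?P \<in> sets ?P" if "i < k" "j < k" for i j
    by (rule measurable_sets[OF borel_measurable_dist[OF coordinate coordinate]]) (use that in auto)
  have "{x \<in> space ?P. inj_on x {..<k}}
      = space ?P - (\<Union>i<k. \<Union>j\<in>{..<k}-{i}. (\<lambda>x. dist (x i) (x j)) -` {0} \<inter> space ?P)"
    unfolding inj_on_def by (auto; blast)
  also have "\<dots> \<in> sets ?P"
    using diagonal by (intro sets.Diff sets.top sets.finite_UN) auto
  finally show ?thesis .
qed

definition sum_inj_tuples :: "nat \<Rightarrow> ((nat \<Rightarrow> 'a) \<Rightarrow> ennreal) \<Rightarrow> 'a set \<Rightarrow> ennreal" where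
  "sum_inj_tuples k \<phi> S = (\<integral>\<^sup>+x. \<phi> x \<partial>count_space {x \<in> {..<k} \<rightarrow>\<^sub>E S. inj_on x {..<k}})"

text \<open>The cut-off is harmless: the configurations of a point process are locally finite.\<close>
lemma measurable_sum_inj_tuples:
  fixes \<mu> :: "'a::{second_countable_topology, metric_space} measure" and k :: nat
  assumes \<mu>: "sets \<mu> = sets borel" and \<phi>: "\<phi> \<in> borel_measurable (PiM {..<k} (\<lambda>_. \<mu>))"
  shows "(\<lambda>S. if locally_finite_config S then sum_inj_tuples k \<phi> S else 0) \<in> borel_measurable (config_space \<mu>)"
proof -
  let ?I = "{x \<in> space (PiM {..<k} (\<lambda>_. \<mu>)). inj_on x {..<k}}"
  have space: "space \<mu> = UNIV" using \<mu> sets_eq_imp_space_eq by fastforce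
  have "sum_inj_tuples k \<phi> = (\<lambda>S. \<integral>\<^sup>+x. \<phi> x * indicator ?I x \<partial>count_space ({..<k} \<rightarrow>\<^sub>E S))"
    unfolding sum_inj_tuples_def
    by (subst (1 2) nn_integral_count_space_indicator)
       (auto intro!: nn_integral_cong simp: indicator_def space_PiM space PiE_def Pi_def)
  moreover have "(\<lambda>x. \<phi> x * indicator ?I x) \<in> borel_measurable (PiM {..<k} (\<lambda>_. \<mu>))"
    using sets_PiM_inj_on[OF \<mu>] \<phi> by measurable
  ultimately have "sum_inj_tuples k \<phi> \<in> borel_measurable (restrict_space (config_space \<mu>) (Collect locally_finite_config))"
    using measurable_count_tuples[OF \<mu>] by presburger
  then show ?thesis
    using locally_finite_configs_sets[OF \<mu>]
    by (subst measurable_If_restrict_space_iff) (auto simp: space_config_space space Collect_conj_eq)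
qed

lemma (in prob_space) distr_pair_eq_pair_measure_if_indep_set:
  assumes X: "random_variable S X" and Y: "random_variable T Y"
    and indep: "indep_set {X -` A \<inter> space M | A. A \<in> sets S} {Y -` B \<inter> space M | B. B \<in> sets T}"
  shows "distr M (S \<Otimes>\<^sub>M T) (\<lambda>\<omega>. (X \<omega>, Y \<omega>)) = distr M S X \<Otimes>\<^sub>M distr M T Y"
proof (rule pair_measure_eqI[symmetric])
  show "sigma_finite_measure (distr M S X)" "sigma_finite_measure (distr M T Y)"
    using prob_space_distr[OF X] prob_space_distr[OF Y] by (simp_all add: prob_space_imp_sigma_finite)
  show "sets (distr M S X \<Otimes>\<^sub>M distr M T Y) = sets (distr M (S \<Otimes>\<^sub>M T) (\<lambda>\<omega>. (X \<omega>, Y \<omega>)))"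
    by (simp add: sets_pair_measure_cong[OF sets_distr sets_distr])
  fix A B assume "A \<in> sets (distr M S X)" "B \<in> sets (distr M T Y)"
  then have A: "A \<in> sets S" and B: "B \<in> sets T" by simp_all
  have "emeasure (distr M (S \<Otimes>\<^sub>M T) (\<lambda>\<omega>. (X \<omega>, Y \<omega>))) (A \<times> B)
      = emeasure M ((X -` A \<inter> space M) \<inter> (Y -` B \<inter> space M))"
  proof -
    have "(\<lambda>\<omega>. (X \<omega>, Y \<omega>)) -` (A \<times> B) \<inter> space M = (X -` A \<inter> space M) \<inter> (Y -` B \<inter> space M)"
      by auto
    then show ?thesis
      using A B X Y by (subst emeasure_distr) (auto intro: measurable_Pair)
  qed
  also have "\<dots> = ennreal (prob (X -` A \<inter> space M) * prob (Y -` B \<inter> space M))"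
    using indep_setD[OF indep] A B by (auto simp: emeasure_eq_measure)
  also have "\<dots> = emeasure (distr M S X) A * emeasure (distr M T Y) B"
    using A B X Y by (simp add: emeasure_distr emeasure_eq_measure ennreal_mult)
  finally show "emeasure (distr M S X) A * emeasure (distr M T Y) B
      = emeasure (distr M (S \<Otimes>\<^sub>M T) (\<lambda>\<omega>. (X \<omega>, Y \<omega>))) (A \<times> B)" by simp
qed

lemma ennreal_Re_average:
  fixes d d0 d1 :: complex
  assumes "d0 + d1 = 2 * d" "0 \<le> Re d0" "0 \<le> Re d1"
  shows "ennreal (Re d) = ennreal (1/2) * ennreal (Re d1) + ennreal (1/2) * ennreal (Re d0)"
proof -
  have Re: "Re d = 1/2 * Re d1 + 1/2 * Re d0"
    using arg_cong[OF assms(1), of Re] by simp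
  have "ennreal (Re d) = ennreal (1/2 * Re d1) + ennreal (1/2 * Re d0)"
    unfolding Re using assms(2,3) by (intro ennreal_plus) auto
  also have "\<dots> = ennreal (1/2) * ennreal (Re d1) + ennreal (1/2) * ennreal (Re d0)"
    using assms(2,3) by (subst (1 2) ennreal_mult) auto
  finally show ?thesis .
qed

lemma nn_integral_Re_average:
  fixes d d0 d1 :: "'a \<Rightarrow> complex"
  assumes "(\<lambda>x. \<phi> x * ennreal (Re (d0 x))) \<in> borel_measurable M"
    and "(\<lambda>x. \<phi> x * ennreal (Re (d1 x))) \<in> borel_measurable M"
    and "AE x in M. 0 \<le> Re (d0 x)" "AE x in M. 0 \<le> Re (d1 x)"
    and "\<And>x. d0 x + d1 x = 2 * d x"
  shows "ennreal (1/2) * (\<integral>\<^sup>+x. \<phi> x * ennreal (Re (d1 x)) \<partial>M)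
      + ennreal (1/2) * (\<integral>\<^sup>+x. \<phi> x * ennreal (Re (d0 x)) \<partial>M)
    = (\<integral>\<^sup>+x. \<phi> x * ennreal (Re (d x)) \<partial>M)"
proof -
  have "ennreal (1/2) * (\<integral>\<^sup>+x. \<phi> x * ennreal (Re (d1 x)) \<partial>M)
      + ennreal (1/2) * (\<integral>\<^sup>+x. \<phi> x * ennreal (Re (d0 x)) \<partial>M)
    = (\<integral>\<^sup>+x. ennreal (1/2) * (\<phi> x * ennreal (Re (d1 x))) + ennreal (1/2) * (\<phi> x * ennreal (Re (d0 x))) \<partial>M)"
    using assms(1,2) by (subst nn_integral_add) (auto simp: nn_integral_cmult)
  also have "\<dots> = (\<integral>\<^sup>+x. \<phi> x * ennreal (Re (d x)) \<partial>M)"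
    using assms(3,4)
  proof (intro nn_integral_cong_AE, eventually_elim)
    case (elim x)
    then show ?case
      by (simp add: ennreal_Re_average[OF assms(5)] distrib_left mult.left_commute)
  qed
  finally show ?thesis .
qed

lemma (in prob_space) nn_integral_if_indep_bernoulli:
  assumes \<xi>_rv: "random_variable (count_space UNIV) \<xi>"
    and \<xi>: "distr M (count_space UNIV) \<xi> = measure_pmf (bernoulli_pmf p)" "0 \<le> p" "p \<le> 1"
    and Y: "random_variable N Y"
    and indep: "indep_set {\<xi> -` A \<inter> space M | A. A \<in> sets (count_space UNIV)} {Y -` B \<inter> space M | B. B \<in> sets N}"
    and G: "G0 \<in> borel_measurable N" "G1 \<in> borel_measurable N"
  shows "(\<integral>\<^sup>+\<omega>. (if \<xi> \<omega> then G1 (Y \<omega>) else G0 (Y \<omega>)) \<partial>M)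
    = ennreal p * (\<integral>\<^sup>+\<omega>. G1 (Y \<omega>) \<partial>M) + ennreal (1 - p) * (\<integral>\<^sup>+\<omega>. G0 (Y \<omega>) \<partial>M)"
proof -
  interpret Y: prob_space "distr M N Y" by (rule prob_space_distr[OF Y])
  define H where "H = (\<lambda>(b, y). if b then G1 y else G0 y)"
  have H: "H \<in> borel_measurable (count_space UNIV \<Otimes>\<^sub>M N)"
    unfolding H_def using G by measurable
  have joint: "distr M (count_space UNIV \<Otimes>\<^sub>M N) (\<lambda>\<omega>. (\<xi> \<omega>, Y \<omega>))
      = measure_pmf (bernoulli_pmf p) \<Otimes>\<^sub>M distr M N Y"
    using distr_pair_eq_pair_measure_if_indep_set[OF \<xi>_rv Y indep] \<xi> by simp
  have "sets (measure_pmf (bernoulli_pmf p) \<Otimes>\<^sub>M distr M N Y) = sets (count_space UNIV \<Otimes>\<^sub>M N)"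
    by (rule sets_pair_measure_cong) simp_all
  then have H': "H \<in> borel_measurable (measure_pmf (bernoulli_pmf p) \<Otimes>\<^sub>M distr M N Y)"
    using H measurable_cong_sets by blast
  have integral_fibre: "(\<integral>\<^sup>+y. H (b, y) \<partial>distr M N Y) = (\<integral>\<^sup>+\<omega>. H (b, Y \<omega>) \<partial>M)" for b
    using H by (intro nn_integral_distr[OF Y]) simp
  have "(\<integral>\<^sup>+\<omega>. (if \<xi> \<omega> then G1 (Y \<omega>) else G0 (Y \<omega>)) \<partial>M) = (\<integral>\<^sup>+\<omega>. H (\<xi> \<omega>, Y \<omega>) \<partial>M)"
    by (simp add: H_def)
  also have "\<dots> = (\<integral>\<^sup>+z. H z \<partial>measure_pmf (bernoulli_pmf p) \<Otimes>\<^sub>M distr M N Y)"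
    unfolding joint[symmetric] using \<xi>_rv Y H by (intro nn_integral_distr[symmetric]) simp_all
  also have "\<dots> = (\<integral>\<^sup>+b. \<integral>\<^sup>+y. H (b, y) \<partial>distr M N Y \<partial>measure_pmf (bernoulli_pmf p))"
    by (rule Y.nn_integral_fst[OF H', symmetric])
  also have "\<dots> = (\<Sum>b\<in>UNIV. (\<integral>\<^sup>+\<omega>. H (b, Y \<omega>) \<partial>M) * ennreal (pmf (bernoulli_pmf p) b))"
    unfolding integral_fibre by (rule nn_integral_measure_pmf_support) auto
  also have "\<dots> = ennreal p * (\<integral>\<^sup>+\<omega>. G1 (Y \<omega>) \<partial>M) + ennreal (1 - p) * (\<integral>\<^sup>+\<omega>. G0 (Y \<omega>) \<partial>M)"
    using \<xi>(2,3) by (simp add: UNIV_bool H_def mult.commute)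
  finally show ?thesis .
qed


lemma nn_integral_sum_inj_tuples_mixture:
  fixes \<mu> :: "'a::{second_countable_topology, metric_space} measure" and k :: nat
  assumes \<mu>: "sets \<mu> = sets borel"
    and pp: "point_process P \<mu> \<Pi>0" "point_process P \<mu> \<Pi>1"
    and \<xi>_rv: "\<xi> \<in> measurable P (count_space UNIV)"
    and \<xi>: "distr P (count_space UNIV) \<xi> = measure_pmf (bernoulli_pmf (1/2))"
    and indep: "prob_space.indep_set P {\<xi> -` A \<inter> space P | A. A \<in> sets (count_space UNIV)}
      {(\<lambda>\<omega>. (\<Pi>0 \<omega>, \<Pi>1 \<omega>)) -` B \<inter> space P | B. B \<in> sets (config_space \<mu> \<Otimes>\<^sub>M config_space \<mu>)}"
    and \<phi>: "\<phi> \<in> borel_measurable (PiM {..<k} (\<lambda>_. \<mu>))"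
  shows "(\<integral>\<^sup>+\<omega>. sum_inj_tuples k \<phi> (if \<xi> \<omega> then \<Pi>1 \<omega> else \<Pi>0 \<omega>) \<partial>P)
    = ennreal (1/2) * (\<integral>\<^sup>+\<omega>. sum_inj_tuples k \<phi> (\<Pi>1 \<omega>) \<partial>P)
      + ennreal (1/2) * (\<integral>\<^sup>+\<omega>. sum_inj_tuples k \<phi> (\<Pi>0 \<omega>) \<partial>P)"
proof -
  interpret prob_space P using pp(1) by (simp add: point_process_def)
  define F where "F S = (if locally_finite_config S then sum_inj_tuples k \<phi> S else 0)" for S
  have F: "F \<in> borel_measurable (config_space \<mu>)"
    unfolding F_def by (rule measurable_sum_inj_tuples[OF \<mu> \<phi>])
  have Y: "(\<lambda>\<omega>. (\<Pi>0 \<omega>, \<Pi>1 \<omega>)) \<in> measurable P (config_space \<mu> \<Otimes>\<^sub>M config_space \<mu>)"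
    using pp by (auto simp: point_process_def)
  have locally_finite: "locally_finite_config (\<Pi>0 \<omega>)" "locally_finite_config (\<Pi>1 \<omega>)"
    if "\<omega> \<in> space P" for \<omega>
    using pp \<mu> that by (auto intro: point_process_locally_finite)
  have "(\<integral>\<^sup>+\<omega>. sum_inj_tuples k \<phi> (if \<xi> \<omega> then \<Pi>1 \<omega> else \<Pi>0 \<omega>) \<partial>P)
      = (\<integral>\<^sup>+\<omega>. (if \<xi> \<omega> then (F \<circ> snd) (\<Pi>0 \<omega>, \<Pi>1 \<omega>) else (F \<circ> fst) (\<Pi>0 \<omega>, \<Pi>1 \<omega>)) \<partial>P)"
    by (rule nn_integral_cong) (simp add: F_def locally_finite)
  also have "\<dots> = ennreal (1/2) * (\<integral>\<^sup>+\<omega>. F (\<Pi>1 \<omega>) \<partial>P) + ennreal (1/2) * (\<integral>\<^sup>+\<omega>. F (\<Pi>0 \<omega>) \<partial>P)"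
    using nn_integral_if_indep_bernoulli[OF \<xi>_rv \<xi> _ _ Y indep, of "F \<circ> fst" "F \<circ> snd"] F
    by (simp add: measurable_comp)
  also have "\<dots> = ennreal (1/2) * (\<integral>\<^sup>+\<omega>. sum_inj_tuples k \<phi> (\<Pi>1 \<omega>) \<partial>P)
      + ennreal (1/2) * (\<integral>\<^sup>+\<omega>. sum_inj_tuples k \<phi> (\<Pi>0 \<omega>) \<partial>P)"
    by (intro arg_cong2[where f = "\<lambda>a b. ennreal (1/2) * a + ennreal (1/2) * b"] nn_integral_cong)
       (simp_all add: F_def locally_finite)
  finally show ?thesis .
qed

lemma dpp_bernoulli_mixture:
  fixes \<mu> :: "'a::{second_countable_topology, metric_space} measure"
  assumes \<mu>: "sets \<mu> = sets borel"
    and dpp0: "dpp P \<mu> L0 \<Pi>0" and dpp1: "dpp P \<mu> L1 \<Pi>1"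
    and L0: "(\<lambda>p. L0 (fst p) (snd p)) \<in> borel_measurable (\<mu> \<Otimes>\<^sub>M \<mu>)"
    and L1: "(\<lambda>p. L1 (fst p) (snd p)) \<in> borel_measurable (\<mu> \<Otimes>\<^sub>M \<mu>)"
    and det_average: "\<And>k x. Determinant.det (kernel_matrix k L0 x) + Determinant.det (kernel_matrix k L1 x)
                        = 2 * Determinant.det (kernel_matrix k K x)"
    and \<xi>_rv: "\<xi> \<in> measurable P (count_space UNIV)"
    and \<xi>: "distr P (count_space UNIV) \<xi> = measure_pmf (bernoulli_pmf (1/2))"
    and indep: "prob_space.indep_set P {\<xi> -` A \<inter> space P | A. A \<in> sets (count_space UNIV)}
      {(\<lambda>\<omega>. (\<Pi>0 \<omega>, \<Pi>1 \<omega>)) -` B \<inter> space P | B. B \<in> sets (config_space \<mu> \<Otimes>\<^sub>M config_space \<mu>)}"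
  shows "dpp P \<mu> K (\<lambda>\<omega>. if \<xi> \<omega> then \<Pi>1 \<omega> else \<Pi>0 \<omega>)"
proof -
  interpret prob_space P using dpp0 by (simp add: dpp_def point_process_def)
  have pp: "point_process P \<mu> \<Pi>0" "point_process P \<mu> \<Pi>1"
    using dpp0 dpp1 by (simp_all add: dpp_def)
  have "\<xi> -` {True} \<inter> space P \<in> sets P"
    using \<xi>_rv by (rule measurable_sets) simp
  then have "point_process P \<mu> (\<lambda>\<omega>. if \<xi> \<omega> then \<Pi>1 \<omega> else \<Pi>0 \<omega>)"
    using pp by (intro point_process_if) (auto simp: vimage_def Int_def conj_commute)
  moreover have "(AE x in PiM {..<k} (\<lambda>_. \<mu>). Determinant.det (kernel_matrix k K x) \<in> \<real>
                    \<and> 0 \<le> Re (Determinant.det (kernel_matrix k K x)))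
    \<and> (\<forall>\<phi> \<in> borel_measurable (PiM {..<k} (\<lambda>_. \<mu>)).
         (\<integral>\<^sup>+\<omega>. sum_inj_tuples k \<phi> (if \<xi> \<omega> then \<Pi>1 \<omega> else \<Pi>0 \<omega>) \<partial>P)
         = (\<integral>\<^sup>+x. \<phi> x * ennreal (Re (Determinant.det (kernel_matrix k K x))) \<partial>PiM {..<k} (\<lambda>_. \<mu>)))"
    if "1 \<le> k" for k
  proof (intro conjI ballI)
    let ?M = "PiM {..<k} (\<lambda>_. \<mu>)"
    let ?d = "\<lambda>L x. Determinant.det (kernel_matrix k L x)"
    have AE0: "AE x in ?M. ?d L0 x \<in> \<real> \<and> 0 \<le> Re (?d L0 x)"
      and AE1: "AE x in ?M. ?d L1 x \<in> \<real> \<and> 0 \<le> Re (?d L1 x)"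
      and I0: "\<And>\<phi>. \<phi> \<in> borel_measurable ?M \<Longrightarrow>
        (\<integral>\<^sup>+\<omega>. sum_inj_tuples k \<phi> (\<Pi>0 \<omega>) \<partial>P) = (\<integral>\<^sup>+x. \<phi> x * ennreal (Re (?d L0 x)) \<partial>?M)"
      and I1: "\<And>\<phi>. \<phi> \<in> borel_measurable ?M \<Longrightarrow>
        (\<integral>\<^sup>+\<omega>. sum_inj_tuples k \<phi> (\<Pi>1 \<omega>) \<partial>P) = (\<integral>\<^sup>+x. \<phi> x * ennreal (Re (?d L1 x)) \<partial>?M)"
      using dpp0 dpp1 that unfolding dpp_def sum_inj_tuples_def by blast+
    show "AE x in ?M. ?d K x \<in> \<real> \<and> 0 \<le> Re (?d K x)"
      using AE0 AE1
    proof eventually_elim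
      case (elim x)
      have average: "?d K x = (?d L0 x + ?d L1 x) / 2" using det_average[of k x] by simp
      show ?case unfolding average using elim by (auto intro!: Reals_add Reals_divide)
    qed
    fix \<phi> :: "(nat \<Rightarrow> 'a) \<Rightarrow> ennreal" assume \<phi>: "\<phi> \<in> borel_measurable ?M"
    have d: "(\<lambda>x. \<phi> x * ennreal (Re (?d L x))) \<in> borel_measurable ?M"
      if "(\<lambda>p. L (fst p) (snd p)) \<in> borel_measurable (\<mu> \<Otimes>\<^sub>M \<mu>)" for L
      using \<phi> det_kernel_matrix_measurable[OF that] by measurable
    have "(\<integral>\<^sup>+\<omega>. sum_inj_tuples k \<phi> (if \<xi> \<omega> then \<Pi>1 \<omega> else \<Pi>0 \<omega>) \<partial>P)
      = ennreal (1/2) * (\<integral>\<^sup>+x. \<phi> x * ennreal (Re (?d L1 x)) \<partial>?M)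
        + ennreal (1/2) * (\<integral>\<^sup>+x. \<phi> x * ennreal (Re (?d L0 x)) \<partial>?M)"
      by (simp add: nn_integral_sum_inj_tuples_mixture[OF \<mu> pp \<xi>_rv \<xi> indep \<phi>] I0 I1 \<phi>)
    also have "\<dots> = (\<integral>\<^sup>+x. \<phi> x * ennreal (Re (?d K x)) \<partial>?M)"
      using AE0 AE1 by (intro nn_integral_Re_average d L0 L1 det_average) (auto elim!: eventually_mono)
    finally show "(\<integral>\<^sup>+\<omega>. sum_inj_tuples k \<phi> (if \<xi> \<omega> then \<Pi>1 \<omega> else \<Pi>0 \<omega>) \<partial>P)
      = (\<integral>\<^sup>+x. \<phi> x * ennreal (Re (?d K x)) \<partial>?M)" .
  qed
  ultimately show ?thesis
    unfolding dpp_def sum_inj_tuples_def by blast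
qed

text \<open>The hypotheses on \<open>\<mu>\<close> and the operator conditions on \<open>K\<close>, \<open>L\<^sub>0\<close>, \<open>L\<^sub>1\<close> are only
  needed for the existence of \<open>\<Pi>\<^sub>0\<close> and \<open>\<Pi>\<^sub>1\<close>, which is assumed here.\<close>
theorem mainTheorem5:
  fixes \<mu> :: "'a::polish_space measure"
    and K :: "'a \<Rightarrow> 'a \<Rightarrow> complex"
    and f :: "'a \<Rightarrow> complex"
    and P :: "'w measure"
    and \<Pi>0 \<Pi>1 :: "'w \<Rightarrow> 'a set"
    and \<xi> :: "'w \<Rightarrow> bool"
  assumes sets_\<mu>: "sets \<mu> = sets borel"
    and sf: "sigma_finite_measure \<mu>"
    and loc_fin: "\<forall>B \<in> sets borel. bounded B \<longrightarrow> emeasure \<mu> B < \<infinity>"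
    and herm: "hermitian_kernel \<mu> K"
    and ltc: "locally_trace_class \<mu> K"
    and f_L2: "L2 \<mu> f"
    and L0: "kernel_op_between_0_I \<mu> (\<lambda>x y. K x y - 1/2 * f x * cnj (f y))"
    and L1: "kernel_op_between_0_I \<mu> (\<lambda>x y. K x y + 1/2 * f x * cnj (f y))"
    and P: "prob_space P"
    and dpp0: "dpp P \<mu> (\<lambda>x y. K x y - 1/2 * f x * cnj (f y)) \<Pi>0"
    and dpp1: "dpp P \<mu> (\<lambda>x y. K x y + 1/2 * f x * cnj (f y)) \<Pi>1"
    and \<xi>_meas: "\<xi> \<in> measurable P (count_space UNIV)"
    and \<xi>_bern: "distr P (count_space UNIV) \<xi> = measure_pmf (bernoulli_pmf (1/2))"
    and \<Pi>01_meas: "(\<lambda>\<omega>. (\<Pi>0 \<omega>, \<Pi>1 \<omega>)) \<in> measurable P (config_space \<mu> \<Otimes>\<^sub>M config_space \<mu>)"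
    and indep: "prob_space.indep_set P
                  {\<xi> -` S \<inter> space P | S. S \<in> sets (count_space UNIV)}
                  {(\<lambda>\<omega>. (\<Pi>0 \<omega>, \<Pi>1 \<omega>)) -` S \<inter> space P | S. S \<in> sets (config_space \<mu> \<Otimes>\<^sub>M config_space \<mu>)}"
  shows "dpp P \<mu> K (\<lambda>\<omega>. if \<xi> \<omega> then \<Pi>1 \<omega> else \<Pi>0 \<omega>)"
proof (rule dpp_bernoulli_mixture[OF sets_\<mu> dpp0 dpp1 _ _ _ \<xi>_meas \<xi>_bern indep])
  have "(\<lambda>(x, y). K x y) \<in> borel_measurable (\<mu> \<Otimes>\<^sub>M \<mu>)"
    using herm unfolding hermitian_kernel_def by (rule conjunct1)
  then have K: "(\<lambda>p. K (fst p) (snd p)) \<in> borel_measurable (\<mu> \<Otimes>\<^sub>M \<mu>)"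
    by (simp only: split_beta')
  have f: "f \<in> borel_measurable \<mu>"
    using f_L2 unfolding L2_def by (rule conjunct1)
  have cnj: "cnj \<in> borel_measurable borel"
    by (rule borel_measurable_continuous_onI) (rule continuous_on_cnj[OF continuous_on_id])
  have "(\<lambda>p. f (fst p)) \<in> borel_measurable (\<mu> \<Otimes>\<^sub>M \<mu>)" "(\<lambda>p. f (snd p)) \<in> borel_measurable (\<mu> \<Otimes>\<^sub>M \<mu>)"
    using f by measurable
  then have rank_one: "(\<lambda>p. 1/2 * f (fst p) * cnj (f (snd p))) \<in> borel_measurable (\<mu> \<Otimes>\<^sub>M \<mu>)"
    using measurable_comp[OF _ cnj] by (intro borel_measurable_times borel_measurable_const) (auto simp: comp_def)
  show "(\<lambda>p. K (fst p) (snd p) - 1/2 * f (fst p) * cnj (f (snd p))) \<in> borel_measurable (\<mu> \<Otimes>\<^sub>M \<mu>)"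
    using K rank_one by (rule borel_measurable_diff)
  show "(\<lambda>p. K (fst p) (snd p) + 1/2 * f (fst p) * cnj (f (snd p))) \<in> borel_measurable (\<mu> \<Otimes>\<^sub>M \<mu>)"
    using K rank_one by (rule borel_measurable_add)
  show "Determinant.det (kernel_matrix k (\<lambda>x y. K x y - 1/2 * f x * cnj (f y)) x)
      + Determinant.det (kernel_matrix k (\<lambda>x y. K x y + 1/2 * f x * cnj (f y)) x)
      = 2 * Determinant.det (kernel_matrix k K x)" for k x
    by (rule det_kernel_matrix_rank_one_plus_minus)
qed

end
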